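(* At every moment during the execution of Greedy Dual on any MPMD or MBPMD instance, the following hold. (i) Every active set $S$ contains exactly $\mathrm{sur}(S)$ free (unmatched) requests. (ii) The family of all sets that are active or inactive at that moment is laminar.
   Context: Problem (MPMD / MBPMD). Let $(\mathcal{X},\mathrm{dist})$ be a metric space. An instance consists of $2m$ requests $u_1,\dots,u_{2m}$. Each request $u$ is a triple $(\mathrm{pos}(u),\mathrm{atime}(u),\mathrm{sgn}(u))$, where $\mathrm{pos}(u)\in\mathcal{X}$ is its location and $\mathrm{atime}(u)\ge0$ is its arrival time, with arrival times nondecreasing. In MPMD, $\mathrm{sgn}(u)=0$ for all requests. In MBPMD, exactly $m$ requests have sign $+1$ and $m$ have sign $-1$. At time $\tau$, an algorithm may match two arrived, unmatched requests $u,v$ with $\mathrm{sgn}(u)=-\mathrm{sgn}(v)$, at cost $\mathrm{dist}(\mathrm{pos}(u),\mathrm{pos}(v))$ (connection cost) plus $(\tau-\mathrm{atime}(u))+(\tau-\mathrm{atime}(v))$ (waiting costs). All requests must eventually be matched. Notation. Edges are unordered pairs $\{u,v\}$ of distinct requests with $\mathrm{sgn}(u)=-\mathrm{sgn}(v)$. For a set $S$ of requests, $\delta(S)$ is the set of edges with exactly one endpoint in $S$. In MPMD, $\mathrm{sur}(S)=|S|\bmod 2$; in MBPMD, $\mathrm{sur}(S)=|\sum_{u\in S}\mathrm{sgn}(u)|$. For an edge $e=(u,v)$, $\mathrm{cost}(e)=\mathrm{dist}(\mathrm{pos}(u),\mathrm{pos}(v))+|\mathrm{atime}(u)-\mathrm{atime}(v)|$.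 Algorithm Greedy Dual (GD). GD maintains a dual variable $y_S\ge0$ for every set $S$ of already-arrived requests; $y_S(\tau)$ denotes its value at time $\tau$. It also maintains a partition of the arrived requests into active sets, with $\mathcal{A}(u)$ denoting the active set containing $u$. An active set is growing if it contains at least one free request, and non-growing otherwise. - When a request $u$ arrives, $\mathcal{A}(u)\leftarrow\{u\}$ becomes a new active set, and $y_S\leftarrow 0$ for every new set $S$ containing $u$. - Tight-constraint event: while there is an edge $e=(u,v)$ between arrived requests with $\mathcal{A}(u)\neq\mathcal{A}(v)$ and $\sum_{S:\,e\in\delta(S)}y_S=\mathrm{cost}(e)$, GD does the following. It merges the two sets: $S=\mathcal{A}(u)\cup\mathcal{A}(v)$ becomes active and $\mathcal{A}(w)\leftarrow S$ for all $w\in S$, while $\mathcal{A}(u)$ and $\mathcal{A}(v)$ become inactive. It marks the edge $e$. Then, while there are free $u',v'\in S$ with $\mathrm{sgn}(u')=-\mathrm{sgn}(v')$, it matches $u'$ with $v'$ at the current time. - At all other times, $y_S$ increases continuously at rate $1$ (the same rate as time) for every active growing set $S$; all other dual variables stay constant. *)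

theory Defs
  imports Complex_Main
begin

text \<open>Requests are indexed by natural numbers 0,...,2m-1, in order of arrival.
  An instance is given by pos, atime, sg.\<close>

datatype variant = MPMD | MBPMD

definition valid_instance :: "variant \<Rightarrow> (nat \<Rightarrow> real) \<Rightarrow> (nat \<Rightarrow> int) \<Rightarrow> nat \<Rightarrow> bool" where
  "valid_instance var atime sg m \<longleftrightarrow>
     (\<forall>k<2*m. 0 \<le> atime k) \<and>
     (\<forall>i j. i \<le> j \<longrightarrow> j < 2*m \<longrightarrow> atime i \<le> atime j) \<and>
     (case var of
        MPMD \<Rightarrow> (\<forall>k<2*m. sg k = 0)
      | MBPMD \<Rightarrow> card {k. k < 2*m \<and> sg k = 1} = m \<and> card {k. k < 2*m \<and> sg k = -1} = m)"

definition sur :: "variant \<Rightarrow> (nat \<Rightarrow> int) \<Rightarrow> nat set \<Rightarrow> nat" where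
  "sur var sg S = (case var of MPMD \<Rightarrow> card S mod 2 | MBPMD \<Rightarrow> nat \<bar>\<Sum>u\<in>S. sg u\<bar>)"

definition laminar :: "'b set set \<Rightarrow> bool" where
  "laminar F \<longleftrightarrow> (\<forall>A\<in>F. \<forall>B\<in>F. A \<subseteq> B \<or> B \<subseteq> A \<or> A \<inter> B = {})"

definition is_edge :: "(nat \<Rightarrow> int) \<Rightarrow> nat \<Rightarrow> nat \<Rightarrow> bool" where
  "is_edge sg u v \<longleftrightarrow> u \<noteq> v \<and> sg u = - sg v"

definition cost :: "(nat \<Rightarrow> 'a::metric_space) \<Rightarrow> (nat \<Rightarrow> real) \<Rightarrow> nat \<Rightarrow> nat \<Rightarrow> real" where
  "cost pos atime u v = dist (pos u) (pos v) + \<bar>atime u - atime v\<bar>"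

text \<open>State of Greedy Dual. matching is the set of matched pairs {u,v};
  marked the set of marked edges; active/inactive the families of active/inactive sets;
  y the dual variables (only sets of arrived requests are relevant).\<close>
record gd_state =
  time :: real
  arrived :: "nat set"
  y :: "nat set \<Rightarrow> real"
  active :: "nat set set"
  inactive :: "nat set set"
  matching :: "nat set set"
  marked :: "nat set set"

definition gd_init :: gd_state where
  "gd_init = \<lparr>time = 0, arrived = {}, y = (\<lambda>_. 0), active = {}, inactive = {},
              matching = {}, marked = {}\<rparr>"

definition is_free :: "gd_state \<Rightarrow> nat \<Rightarrow> bool" where
  "is_free s w \<longleftrightarrow> w \<in> arrived s \<and> (\<forall>p\<in>matching s. w \<notin> p)"

definition growing :: "gd_state \<Rightarrow> nat set \<Rightarrow> bool" where
  "growing s S \<longleftrightarrow> (\<exists>w\<in>S. is_free s w)"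

definition load :: "gd_state \<Rightarrow> nat \<Rightarrow> nat \<Rightarrow> real" where
  "load s u v = sum (y s) {S. S \<subseteq> arrived s \<and> ((u \<in> S) \<noteq> (v \<in> S))}"

definition diff_active :: "gd_state \<Rightarrow> nat \<Rightarrow> nat \<Rightarrow> bool" where
  "diff_active s u v \<longleftrightarrow>
     (\<exists>Su\<in>active s. \<exists>Sv\<in>active s. u \<in> Su \<and> v \<in> Sv \<and> Su \<noteq> Sv)"

definition tight_exists :: "(nat \<Rightarrow> 'a::metric_space) \<Rightarrow> (nat \<Rightarrow> real) \<Rightarrow> (nat \<Rightarrow> int) \<Rightarrow> gd_state \<Rightarrow> bool" where
  "tight_exists pos atime sg s \<longleftrightarrow>
     (\<exists>u v. u \<in> arrived s \<and> v \<in> arrived s \<and> is_edge sg u v \<and> diff_active s u v \<and>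
            load s u v = cost pos atime u v)"

inductive match_step :: "(nat \<Rightarrow> int) \<Rightarrow> nat set \<Rightarrow> gd_state \<Rightarrow> gd_state \<Rightarrow> bool"
  for sg S where
  "u \<in> S \<Longrightarrow> v \<in> S \<Longrightarrow> is_edge sg u v \<Longrightarrow> is_free s u \<Longrightarrow> is_free s v \<Longrightarrow>
   match_step sg S s (s\<lparr>matching := insert {u, v} (matching s)\<rparr>)"

definition match_done :: "(nat \<Rightarrow> int) \<Rightarrow> nat set \<Rightarrow> gd_state \<Rightarrow> bool" where
  "match_done sg S s \<longleftrightarrow>
     \<not> (\<exists>u v. u \<in> S \<and> v \<in> S \<and> is_edge sg u v \<and> is_free s u \<and> is_free s v)"

text \<open>Atomic steps of Greedy Dual on an instance with n requests:
  arrival of the next request, a tight-constraint event (merge + matching loop),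
  and continuous growth of the duals over a time interval.\<close>
inductive gd_step :: "(nat \<Rightarrow> 'a::metric_space) \<Rightarrow> (nat \<Rightarrow> real) \<Rightarrow> (nat \<Rightarrow> int) \<Rightarrow> nat
                       \<Rightarrow> gd_state \<Rightarrow> gd_state \<Rightarrow> bool"
  for pos atime sg n where
  arrive:
  "arrived s = {..<k} \<Longrightarrow> k < n \<Longrightarrow> atime k = time s \<Longrightarrow>
   gd_step pos atime sg n s
     (s\<lparr>arrived := {..<Suc k}, y := (\<lambda>S. if k \<in> S then 0 else y s S),
        active := insert {k} (active s)\<rparr>)"
| tight:
  "u \<in> arrived s \<Longrightarrow> v \<in> arrived s \<Longrightarrow> is_edge sg u v \<Longrightarrow>
   Su \<in> active s \<Longrightarrow> Sv \<in> active s \<Longrightarrow> u \<in> Su \<Longrightarrow> v \<in> Sv \<Longrightarrow> Su \<noteq> Sv \<Longrightarrow>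
   load s u v = cost pos atime u v \<Longrightarrow>
   s1 = s\<lparr>active := insert (Su \<union> Sv) (active s - {Su, Sv}),
          inactive := inactive s \<union> {Su, Sv},
          marked := insert {u, v} (marked s)\<rparr> \<Longrightarrow>
   (match_step sg (Su \<union> Sv))\<^sup>*\<^sup>* s1 s2 \<Longrightarrow> match_done sg (Su \<union> Sv) s2 \<Longrightarrow>
   gd_step pos atime sg n s s2"
| grow:
  "t' > time s \<Longrightarrow> (\<forall>k<n. atime k < t' \<longrightarrow> k \<in> arrived s) \<Longrightarrow>
   \<not> tight_exists pos atime sg s \<Longrightarrow>
   s' = s\<lparr>time := t',
          y := (\<lambda>S. if S \<in> active s \<and> growing s S then y s S + (t' - time s) else y s S)\<rparr> \<Longrightarrow>
   (\<forall>u v. u \<in> arrived s \<longrightarrow> v \<in> arrived s \<longrightarrow> is_edge sg u v \<longrightarrow> diff_active s u v \<longrightarrow>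
          load s' u v \<le> cost pos atime u v) \<Longrightarrow>
   gd_step pos atime sg n s s'"

end

theory Submission
  imports Defs
begin

text \<open>The active sets
  partition the arrived requests, every inactive set lies inside an active one (so adding
  the merged set keeps the family laminar), and inside an active set the matched requests
  form a balanced set (even size, sign sum zero) while no two free requests form an edge:
  the matching loop run after each merge guarantees the latter for the new set. Free
  requests without edges between them are at most one request in MPMD and requests of a
  single sign in MBPMD; in both cases their number is the surplus of the active set.\<close>

definition balanced :: "(nat \<Rightarrow> int) \<Rightarrow> nat set \<Rightarrow> bool" where
  "balanced sg A \<longleftrightarrow> even (card A) \<and> sum sg A = 0"

definition matched_part :: "gd_state \<Rightarrow> nat set \<Rightarrow> nat set" where
  "matched_part s S = {w \<in> S. \<not> is_free s w}"

definition free_unlinked :: "(nat \<Rightarrow> int) \<Rightarrow> gd_state \<Rightarrow> nat set \<Rightarrow> bool" where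
  "free_unlinked sg s S \<longleftrightarrow>
     (\<forall>u\<in>S. \<forall>v\<in>S. is_free s u \<longrightarrow> is_free s v \<longrightarrow> \<not> is_edge sg u v)"

definition gd_structure :: "(nat \<Rightarrow> int) \<Rightarrow> nat \<Rightarrow> gd_state \<Rightarrow> bool" where
  "gd_structure sg n s \<longleftrightarrow>
     arrived s \<subseteq> {..<n} \<and> (\<forall>p\<in>matching s. p \<subseteq> arrived s) \<and>
     (\<forall>S\<in>active s. S \<subseteq> arrived s) \<and> pairwise disjnt (active s) \<and>
     (\<forall>F\<in>inactive s. \<exists>T\<in>active s. F \<subseteq> T) \<and>
     laminar (active s \<union> inactive s) \<and>
     (\<forall>S\<in>active s. balanced sg (matched_part s S))"

definition gd_invariant :: "(nat \<Rightarrow> int) \<Rightarrow> nat \<Rightarrow> gd_state \<Rightarrow> bool" where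
  "gd_invariant sg n s \<longleftrightarrow> gd_structure sg n s \<and> (\<forall>S\<in>active s. free_unlinked sg s S)"

lemma laminar_insert:
  assumes "laminar F" "\<forall>A\<in>F. A \<subseteq> S \<or> A \<inter> S = {}"
  shows "laminar (insert S F)"
  using assms unfolding laminar_def by blast

lemma pairwise_disjnt_merge:
  assumes "pairwise disjnt P" "A \<in> P" "B \<in> P"
  shows "pairwise disjnt (insert (A \<union> B) (P - {A, B}))"
  using assms unfolding pairwise_def disjnt_def by blast

lemma subset_or_disjoint_merge:
  assumes "pairwise disjnt P" "A \<in> P" "B \<in> P" "T \<in> P" "C \<subseteq> T"
  shows "C \<subseteq> A \<union> B \<or> C \<inter> (A \<union> B) = {}"
  using assms unfolding pairwise_def disjnt_def by blast

lemma balanced_Un_disjoint: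
  assumes "balanced sg A" "balanced sg B" "finite A" "finite B" "A \<inter> B = {}"
  shows "balanced sg (A \<union> B)"
  using assms by (simp add: balanced_def card_Un_disjoint sum.union_disjoint)

lemma balanced_insert_edge:
  assumes "balanced sg A" "finite A" "is_edge sg u v" "u \<notin> A" "v \<notin> A"
  shows "balanced sg (insert u (insert v A))"
  using assms by (simp add: balanced_def is_edge_def)

lemma valid_instance_MBPMD_signs:
  assumes "valid_instance MBPMD atime sg m" "k < 2 * m"
  shows "sg k = 1 \<or> sg k = -1"
proof -
  let ?P = "{k. k < 2 * m \<and> sg k = 1}" and ?N = "{k. k < 2 * m \<and> sg k = -1}"
  have "card (?P \<union> ?N) = card ?P + card ?N"
    by (rule card_Un_disjoint) auto
  also have "\<dots> = card {..<2 * m}"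
    using assms(1) by (simp add: valid_instance_def)
  finally have "?P \<union> ?N = {..<2 * m}"
    by (intro card_subset_eq) auto
  then show ?thesis using assms(2) by blast
qed

lemma card_mod_2_eq_card_subsingleton:
  assumes "finite S" "F \<subseteq> S" "balanced sg (S - F)" "\<forall>u\<in>F. \<forall>v\<in>F. u = v"
  shows "card S mod 2 = card F"
proof -
  have fin: "finite F"
    using assms(1,2) by (rule finite_subset[rotated])
  obtain q where "card (S - F) = 2 * q"
    using assms(3) by (auto simp: balanced_def elim: evenE)
  moreover have "card (S - F) = card S - card F" "card F \<le> card S"
    using assms(1,2) fin by (simp_all add: card_Diff_subset card_mono)
  ultimately have "card S = card F + 2 * q"
    by linarith
  moreover have "card F < 2"
    using assms(4) fin card_le_Suc0_iff_eq by fastforce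
  ultimately show ?thesis
    by simp
qed

lemma abs_sum_eq_card_same_sign:
  fixes sg :: "nat \<Rightarrow> int"
  assumes "finite F" "\<forall>u\<in>F. \<bar>sg u\<bar> = 1" "\<forall>u\<in>F. \<forall>v\<in>F. sg u = sg v"
  shows "nat \<bar>sum sg F\<bar> = card F"
proof (cases "F = {}")
  case False
  then obtain u where u: "u \<in> F" by blast
  then have "sg w = sg u" if "w \<in> F" for w
    using assms(3) that by blast
  then have "sum sg F = sum (\<lambda>_. sg u) F"
    by (rule sum.cong[OF refl])
  then have "sum sg F = of_nat (card F) * sg u"
    by simp
  then show ?thesis
    using assms(2) u by (simp add: abs_mult)
qed simp

lemma card_unlinked_eq_sur:
  assumes valid: "valid_instance var atime sg m"
    and S: "S \<subseteq> {..<2 * m}" and F: "F \<subseteq> S" and bal: "balanced sg (S - F)"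
    and unlinked: "\<forall>u\<in>F. \<forall>v\<in>F. \<not> is_edge sg u v"
  shows "card F = sur var sg S"
proof -
  have fin: "finite S" "finite F"
    using S F by (auto intro: finite_subset)
  have request: "u < 2 * m" if "u \<in> F" for u
    using S F that by auto
  show ?thesis
  proof (cases var)
    case MPMD
    have "sg u = 0" if "u \<in> F" for u
      using valid request[OF that] MPMD by (simp add: valid_instance_def)
    then have "\<forall>u\<in>F. \<forall>v\<in>F. u = v"
      using unlinked by (auto simp: is_edge_def)
    then show ?thesis
      using card_mod_2_eq_card_subsingleton[OF fin(1) F bal] MPMD by (simp add: sur_def)
  next
    case MBPMD
    have signs: "sg u = 1 \<or> sg u = -1" if "u \<in> F" for u
      using valid_instance_MBPMD_signs[OF _ request[OF that]] valid MBPMD by simp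
    have same_sign: "\<forall>u\<in>F. \<forall>v\<in>F. sg u = sg v"
    proof (intro ballI)
      fix u v assume uv: "u \<in> F" "v \<in> F"
      then have "u = v \<or> sg u \<noteq> - sg v"
        using unlinked by (auto simp: is_edge_def)
      then show "sg u = sg v"
        using signs[OF uv(1)] signs[OF uv(2)] by auto
    qed
    have "\<forall>u\<in>F. \<bar>sg u\<bar> = 1"
      using signs by fastforce
    then have "nat \<bar>sum sg F\<bar> = card F"
      by (rule abs_sum_eq_card_same_sign[OF fin(2) _ same_sign])
    moreover have "sum sg S = sum sg F"
      using sum.subset_diff[OF F fin(1), of sg] bal by (simp add: balanced_def)
    ultimately show ?thesis
      using MBPMD by (simp add: sur_def)
  qed
qed

lemma match_step_frame:
  assumes "match_step sg S s s'"
  shows "active s' = active s \<and> inactive s' = inactive s \<and> arrived s' = arrived s \<and>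
         (\<forall>w. is_free s' w \<longrightarrow> is_free s w)"
  using assms by cases (auto simp: is_free_def)

lemma match_steps_frame:
  assumes "(match_step sg S)\<^sup>*\<^sup>* s s'"
  shows "active s' = active s \<and> inactive s' = inactive s \<and> arrived s' = arrived s \<and>
         (\<forall>w. is_free s' w \<longrightarrow> is_free s w)"
  using assms by induction (auto dest: match_step_frame)

lemma gd_structure_finite_active:
  assumes "gd_structure sg n s" "T \<in> active s"
  shows "finite T"
proof -
  have "T \<subseteq> {..<n}"
    using assms by (auto simp: gd_structure_def)
  then show ?thesis
    using finite_subset by blast
qed

lemma finite_matched_part:
  assumes "gd_structure sg n s" "T \<in> active s"
  shows "finite (matched_part s T)"
  using gd_structure_finite_active[OF assms] by (simp add: matched_part_def)

lemma match_step_structure: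
  assumes I: "gd_structure sg n s" and S: "S \<in> active s" and step: "match_step sg S s s'"
  shows "gd_structure sg n s'"
proof -
  from step obtain u v where uv: "u \<in> S" "v \<in> S" "is_edge sg u v" "is_free s u" "is_free s v"
    and s': "s' = s\<lparr>matching := insert {u, v} (matching s)\<rparr>"
    by cases auto
  have same: "arrived s' = arrived s" "active s' = active s" "inactive s' = inactive s"
    "matching s' = insert {u, v} (matching s)"
    using s' by simp_all
  have free': "is_free s' w \<longleftrightarrow> is_free s w \<and> w \<noteq> u \<and> w \<noteq> v" for w
    using s' by (auto simp: is_free_def)
  have "balanced sg (matched_part s' T)" if T: "T \<in> active s" for T
  proof (cases "T = S")
    case True
    then have "matched_part s' T = insert u (insert v (matched_part s T))"
      using uv free' by (auto simp: matched_part_def)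
    moreover have "u \<notin> matched_part s T" "v \<notin> matched_part s T"
      using uv by (auto simp: matched_part_def)
    moreover have "balanced sg (matched_part s T)"
      using I T by (simp add: gd_structure_def)
    ultimately show ?thesis
      using balanced_insert_edge finite_matched_part[OF I T] uv(3) by simp
  next
    case False
    with I S T have "T \<inter> S = {}"
      by (auto simp: gd_structure_def pairwise_def disjnt_def)
    then have "matched_part s' T = matched_part s T"
      using uv free' by (auto simp: matched_part_def)
    then show ?thesis
      using I T by (simp add: gd_structure_def)
  qed
  moreover have "{u, v} \<subseteq> arrived s"
    using uv by (auto simp: is_free_def)
  ultimately show ?thesis
    using I by (simp add: gd_structure_def same)
qed

lemma match_steps_structure:
  assumes "(match_step sg S)\<^sup>*\<^sup>* s s'" "gd_structure sg n s" "S \<in> active s"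
  shows "gd_structure sg n s'"
  using assms
proof induction
  case (step s' s'')
  moreover have "S \<in> active s'"
    using match_steps_frame[OF step(1)] step(5) by simp
  ultimately show ?case
    using match_step_structure by blast
qed simp

lemma arrive_invariant:
  assumes I: "gd_invariant sg n s" and k: "arrived s = {..<k}" "k < n"
    and s': "s' = s\<lparr>arrived := {..<Suc k}, y := Y, active := insert {k} (active s)\<rparr>"
  shows "gd_invariant sg n s'"
proof -
  have S: "gd_structure sg n s" and unl: "\<forall>S\<in>active s. free_unlinked sg s S"
    using I by (auto simp: gd_invariant_def)
  have old: "\<forall>F\<in>active s \<union> inactive s. F \<subseteq> {..<k}"
    using S k by (fastforce simp: gd_structure_def)
  have free': "is_free s' w \<longleftrightarrow> (w < k \<and> is_free s w) \<or> w = k" for w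
    using S k by (fastforce simp: is_free_def s' gd_structure_def)
  have below: "\<forall>p\<in>matching s. p \<subseteq> {..<Suc k}" "\<forall>T\<in>active s. T \<subseteq> {..<Suc k}"
    using S k by (auto simp: gd_structure_def lessThan_Suc)
  have old_free: "\<forall>w\<in>T. is_free s' w = is_free s w" if "T \<in> active s" for T
    using old that free' by auto
  have "laminar (insert {k} (active s \<union> inactive s))"
    using S old by (intro laminar_insert) (auto simp: gd_structure_def)
  moreover have "pairwise disjnt (insert {k} (active s))"
    using S old by (auto simp: gd_structure_def pairwise_insert disjnt_def)
  moreover have "\<forall>T\<in>active s. matched_part s' T = matched_part s T"
    using old_free by (auto simp: matched_part_def)
  moreover have "balanced sg (matched_part s' {k})"
  proof -
    have "matched_part s' {k} = {}"
      using free' by (auto simp: matched_part_def)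
    then show ?thesis
      by (simp add: balanced_def)
  qed
  moreover have "\<forall>T\<in>active s. free_unlinked sg s' T"
    using old_free unl by (simp add: free_unlinked_def)
  moreover have "free_unlinked sg s' {k}"
    by (simp add: free_unlinked_def is_edge_def)
  ultimately show ?thesis
    using S k below by (auto simp: gd_invariant_def gd_structure_def s')
qed

lemma merge_structure:
  assumes I: "gd_structure sg n s" and A: "A \<in> active s" and B: "B \<in> active s" "A \<noteq> B"
  shows "gd_structure sg n (s\<lparr>active := insert (A \<union> B) (active s - {A, B}),
                               inactive := inactive s \<union> {A, B}, marked := Mk\<rparr>)"
    (is "gd_structure sg n ?s")
proof -
  have disj: "pairwise disjnt (active s)" and refine: "\<forall>F\<in>inactive s. \<exists>T\<in>active s. F \<subseteq> T"
    using I by (auto simp: gd_structure_def)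
  have "\<forall>C\<in>active s \<union> inactive s. C \<subseteq> A \<union> B \<or> C \<inter> (A \<union> B) = {}"
    using subset_or_disjoint_merge[OF disj A B(1)] refine by blast
  then have "laminar (insert (A \<union> B) (active s \<union> inactive s))"
    using I laminar_insert by (auto simp: gd_structure_def)
  moreover have "active ?s \<union> inactive ?s = insert (A \<union> B) (active s \<union> inactive s)"
    using A B by auto
  moreover have "balanced sg (matched_part s (A \<union> B))"
  proof -
    have "matched_part s (A \<union> B) = matched_part s A \<union> matched_part s B"
      by (auto simp: matched_part_def)
    moreover have "matched_part s A \<inter> matched_part s B = {}"
      using disj A B by (auto simp: matched_part_def pairwise_def disjnt_def)
    moreover have "finite (matched_part s A)" "finite (matched_part s B)"
      using finite_matched_part I A B by blast+
    ultimately show ?thesis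
      using I A B balanced_Un_disjoint by (metis gd_structure_def)
  qed
  moreover have "\<forall>F\<in>inactive ?s. \<exists>T\<in>active ?s. F \<subseteq> T"
    using refine A B by simp blast
  moreover have "pairwise disjnt (active ?s)"
    using pairwise_disjnt_merge[OF disj A B(1)] by simp
  moreover have "\<forall>T\<in>active ?s. T \<subseteq> arrived ?s"
    using I A B by (auto simp: gd_structure_def)
  ultimately show ?thesis
    using I by (auto simp: gd_structure_def is_free_def matched_part_def)
qed

lemma tight_invariant:
  assumes I: "gd_invariant sg n s" and A: "A \<in> active s" and B: "B \<in> active s" "A \<noteq> B"
    and s1: "s1 = s\<lparr>active := insert (A \<union> B) (active s - {A, B}),
                    inactive := inactive s \<union> {A, B}, marked := Mk\<rparr>"
    and loop: "(match_step sg (A \<union> B))\<^sup>*\<^sup>* s1 s2" and finished: "match_done sg (A \<union> B) s2"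
  shows "gd_invariant sg n s2"
proof -
  have "gd_structure sg n s1"
    using merge_structure[of sg n s A B Mk] I A B unfolding s1 gd_invariant_def by blast
  moreover have "A \<union> B \<in> active s1"
    by (simp add: s1)
  ultimately have "gd_structure sg n s2"
    by (rule match_steps_structure[OF loop])
  moreover have "free_unlinked sg s2 T" if T: "T \<in> active s2" for T
  proof (cases "T = A \<union> B")
    case True
    then show ?thesis
      using finished by (auto simp: match_done_def free_unlinked_def)
  next
    case False
    have frame: "active s2 = active s1" "\<forall>w. is_free s2 w \<longrightarrow> is_free s1 w"
      using match_steps_frame[OF loop] by simp_all
    have "is_free s1 = is_free s"
      by (simp add: s1 is_free_def fun_eq_iff)
    moreover have "T \<in> active s"
      using T False frame(1) by (simp add: s1)
    then have "free_unlinked sg s T"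
      using I by (simp add: gd_invariant_def)
    ultimately show ?thesis
      using frame(2) by (simp add: free_unlinked_def)
  qed
  ultimately show ?thesis
    by (simp add: gd_invariant_def)
qed

lemma grow_invariant:
  assumes "gd_invariant sg n s"
  shows "gd_invariant sg n (s\<lparr>time := t, y := Y\<rparr>)"
proof -
  have "is_free (s\<lparr>time := t, y := Y\<rparr>) = is_free s"
    by (simp add: is_free_def fun_eq_iff)
  then show ?thesis
    using assms by (simp add: gd_invariant_def gd_structure_def matched_part_def free_unlinked_def)
qed

lemma gd_step_invariant:
  assumes "gd_step pos atime sg n s s'" "gd_invariant sg n s"
  shows "gd_invariant sg n s'"
  using assms(1)
proof cases
  case arrive
  then show ?thesis using arrive_invariant[OF assms(2)] by blast
next
  case tight
  then show ?thesis using tight_invariant[OF assms(2)] by blast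
next
  case grow
  then show ?thesis using grow_invariant[OF assms(2)] by simp
qed

lemma reachable_invariant:
  assumes "(gd_step pos atime sg n)\<^sup>*\<^sup>* gd_init s"
  shows "gd_invariant sg n s"
  using assms
proof induction
  case base
  show ?case by (simp add: gd_invariant_def gd_structure_def gd_init_def laminar_def)
next
  case step
  then show ?case using gd_step_invariant by blast
qed

lemma gd_invariant_card_free:
  assumes valid: "valid_instance var atime sg m" and I: "gd_invariant sg (2 * m) s"
    and S: "S \<in> active s"
  shows "card {w \<in> S. is_free s w} = sur var sg S"
proof (rule card_unlinked_eq_sur[OF valid])
  show "S \<subseteq> {..<2 * m}"
    using I S by (auto simp: gd_invariant_def gd_structure_def)
  have "S - {w \<in> S. is_free s w} = matched_part s S"
    by (auto simp: matched_part_def)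
  then show "balanced sg (S - {w \<in> S. is_free s w})"
    using I S by (simp add: gd_invariant_def gd_structure_def)
  show "\<forall>u\<in>{w \<in> S. is_free s w}. \<forall>v\<in>{w \<in> S. is_free s w}. \<not> is_edge sg u v"
    using I S by (auto simp: gd_invariant_def free_unlinked_def)
qed auto

theorem mainTheorem2:
  fixes pos :: "nat \<Rightarrow> 'a::metric_space" and atime :: "nat \<Rightarrow> real" and sg :: "nat \<Rightarrow> int"
    and m :: nat and var :: variant and s :: gd_state
  assumes "valid_instance var atime sg m"
    and "(gd_step pos atime sg (2 * m))\<^sup>*\<^sup>* gd_init s"
  shows "(\<forall>S\<in>active s. card {w \<in> S. is_free s w} = sur var sg S)
         \<and> laminar (active s \<union> inactive s)"
proof -
  have I: "gd_invariant sg (2 * m) s"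
    using reachable_invariant[OF assms(2)] .
  then have "laminar (active s \<union> inactive s)"
    by (simp add: gd_invariant_def gd_structure_def)
  then show ?thesis
    using gd_invariant_card_free[OF assms(1) I] by blast
qed

end
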